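(* Let $\mathcal{C}$ be an $\ell$-quasi-cyclic code over $\mathbb{F}_q$ of length $\ell m$ with $\gcd(m,\mathrm{char}(\mathbb{F}_q))=1$. Let $\mathbf{G}(X)\in\mathbb{F}_q[X]^{\ell\times\ell}$ be a generator matrix of $\mathcal{C}$ in RGB/POT form and let $\bar{\mathbf{G}}(X)\in\mathbb{F}_q[X]^{\ell\times\ell}$ be a generator matrix of the same code $\mathcal{C}$ in Pre-RGB/POT form. Let $\lambda$ be an eigenvalue of $\mathbf{G}(X)$. Then the right kernels of $\mathbf{G}(\lambda)$ and $\bar{\mathbf{G}}(\lambda)$ (over an extension field of $\mathbb{F}_q$ containing $\lambda$) are equal; in particular the multiplicities and corresponding eigenvectors coincide.
   Context: An $\ell$-quasi-cyclic code $\mathcal{C}$ of length $\ell m$ over $\mathbb{F}_q$ is a linear code such that if $(c_{0,0},\dots,c_{\ell-1,0},c_{0,1},\dots,c_{\ell-1,1},\dots,c_{0,m-1},\dots,c_{\ell-1,m-1})\in\mathcal{C}$ then the cyclic shift by $\ell$ positions $(c_{0,m-1},\dots,c_{\ell-1,m-1},c_{0,0},\dots,c_{\ell-1,0},\dots,c_{0,m-2},\dots,c_{\ell-1,m-2})\in\mathcal{C}$. A codeword is identified with the vector $(c_0(X),\dots,c_{\ell-1}(X))$, $c_j(X)=\sum_{i=0}^{m-1}c_{j,i}X^i$; then $\mathcal{C}$ is an $R$-submodule of $R^\ell$, $R=\mathbb{F}_q[X]/\langle X^m-1\rangle$, and is the image under componentwise reduction modulo $X^m-1$ of an $\mathbb{F}_q[X]$-submodule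 $\tilde{\mathcal{C}}\subseteq\mathbb{F}_q[X]^\ell$ containing $(X^m-1)\mathbf{e}_j$ for all $j$. A matrix $\mathbf{M}(X)\in\mathbb{F}_q[X]^{\ell\times\ell}$ is a generator matrix of $\mathcal{C}$ if its rows together with $(X^m-1)\mathbf{e}_j$, $j=0,\dots,\ell-1$, generate $\tilde{\mathcal{C}}$. It is in RGB/POT (reduced Gröbner basis, position-over-term) form if, writing $\mathbf{M}=(g_{i,j}(X))$: (C1) $g_{i,j}=0$ for $0\le j<i<\ell$; (C2) $\deg g_{j,i}<\deg g_{i,i}$ for all $j<i$; (C3) $g_{i,i}\mid X^m-1$ for all $i$; (C4) if $g_{i,i}=X^m-1$ then $g_{i,j}=0$ for all $j>i$. It is in Pre-RGB/POT form if it satisfies C1, C3 and C4 (C2 is not required), with the same diagonal entries as the RGB/POT form. An eigenvalue of $\mathbf{G}(X)$ is a root (in an extension field) of $\det\mathbf{G}(X)=\prod_i g_{i,i}(X)$; its algebraic multiplicity is the largest $\mu$ with $(X-\lambda)^\mu\mid\det\mathbf{G}(X)$, and its geometric multiplicity is the dimension of the right kernel of $\mathbf{G}(\lambda)$. *)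

theory Defs
  imports "HOL-Computational_Algebra.Polynomial"
begin

(* Vectors in F[X]^l are functions nat => 'a poly, meaningful on indices < l
   (set to 0 outside). Matrices are functions nat => nat => 'a poly, entry (i,j)
   meaningful for i, j < l. *)

definition xm1 :: "nat \<Rightarrow> 'a::comm_ring_1 poly" where
  "xm1 m = monom 1 m - 1"

definition gen_module :: "nat \<Rightarrow> nat \<Rightarrow> (nat \<Rightarrow> nat \<Rightarrow> 'a::field poly) \<Rightarrow> (nat \<Rightarrow> 'a poly) set" where
  "gen_module l m M = {v. \<exists>a b. v = (\<lambda>k. if k < l then (\<Sum>i<l. a i * M i k) + b k * xm1 m else 0)}"

(* The code (subset of R^l, represented by reduced representatives) generated by M:
   image of the generated module under componentwise reduction mod X^m - 1. *)
definition code_of :: "nat \<Rightarrow> nat \<Rightarrow> (nat \<Rightarrow> nat \<Rightarrow> 'a::field poly) \<Rightarrow> (nat \<Rightarrow> 'a poly) set" where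
  "code_of l m M = (\<lambda>v k. v k mod xm1 m) ` gen_module l m M"

definition is_generator_matrix :: "nat \<Rightarrow> nat \<Rightarrow> (nat \<Rightarrow> 'a::field poly) set \<Rightarrow> (nat \<Rightarrow> nat \<Rightarrow> 'a poly) \<Rightarrow> bool" where
  "is_generator_matrix l m C M \<longleftrightarrow> code_of l m M = C"

definition C1 :: "nat \<Rightarrow> (nat \<Rightarrow> nat \<Rightarrow> 'a::field poly) \<Rightarrow> bool" where
  "C1 l M \<longleftrightarrow> (\<forall>i j. j < i \<and> i < l \<longrightarrow> M i j = 0)"

(* deg 0 = -infinity convention: deg g_{j,i} < deg g_{i,i} *)
definition C2 :: "nat \<Rightarrow> (nat \<Rightarrow> nat \<Rightarrow> 'a::field poly) \<Rightarrow> bool" where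
  "C2 l M \<longleftrightarrow> (\<forall>i j. j < i \<and> i < l \<longrightarrow> M j i = 0 \<or> degree (M j i) < degree (M i i))"

definition C3 :: "nat \<Rightarrow> nat \<Rightarrow> (nat \<Rightarrow> nat \<Rightarrow> 'a::field poly) \<Rightarrow> bool" where
  "C3 l m M \<longleftrightarrow> (\<forall>i < l. M i i dvd xm1 m)"

definition C4 :: "nat \<Rightarrow> nat \<Rightarrow> (nat \<Rightarrow> nat \<Rightarrow> 'a::field poly) \<Rightarrow> bool" where
  "C4 l m M \<longleftrightarrow> (\<forall>i < l. M i i = xm1 m \<longrightarrow> (\<forall>j. i < j \<and> j < l \<longrightarrow> M i j = 0))"

definition RGB_POT :: "nat \<Rightarrow> nat \<Rightarrow> (nat \<Rightarrow> nat \<Rightarrow> 'a::field poly) \<Rightarrow> bool" where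
  "RGB_POT l m M \<longleftrightarrow> C1 l M \<and> C2 l M \<and> C3 l m M \<and> C4 l m M"

definition Pre_RGB_POT :: "nat \<Rightarrow> nat \<Rightarrow> (nat \<Rightarrow> nat \<Rightarrow> 'a::field poly) \<Rightarrow> (nat \<Rightarrow> nat \<Rightarrow> 'a poly) \<Rightarrow> bool" where
  "Pre_RGB_POT l m G M \<longleftrightarrow> C1 l M \<and> C3 l m M \<and> C4 l m M \<and> (\<forall>i < l. M i i = G i i)"

definition field_embedding :: "('a::field \<Rightarrow> 'b::field) \<Rightarrow> bool" where
  "field_embedding \<phi> \<longleftrightarrow> \<phi> 0 = 0 \<and> \<phi> 1 = 1 \<and>
     (\<forall>x y. \<phi> (x + y) = \<phi> x + \<phi> y) \<and> (\<forall>x y. \<phi> (x * y) = \<phi> x * \<phi> y)"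

definition det_upper :: "nat \<Rightarrow> (nat \<Rightarrow> nat \<Rightarrow> 'a::field poly) \<Rightarrow> 'a poly" where
  "det_upper l M = (\<Prod>i<l. M i i)"

definition is_eigenvalue :: "('a::field \<Rightarrow> 'b::field) \<Rightarrow> nat \<Rightarrow> (nat \<Rightarrow> nat \<Rightarrow> 'a poly) \<Rightarrow> 'b \<Rightarrow> bool" where
  "is_eigenvalue \<phi> l M z \<longleftrightarrow> poly (map_poly \<phi> (det_upper l M)) z = 0"

definition right_kernel :: "('a::field \<Rightarrow> 'b::field) \<Rightarrow> nat \<Rightarrow> (nat \<Rightarrow> nat \<Rightarrow> 'a poly) \<Rightarrow> 'b \<Rightarrow> (nat \<Rightarrow> 'b) set" where
  "right_kernel \<phi> l M z = {v. (\<forall>j\<ge>l. v j = 0) \<and>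
      (\<forall>i<l. (\<Sum>j<l. poly (map_poly \<phi> (M i j)) z * v j) = 0)}"

end

theory Submission
  imports Defs "Jordan_Normal_Form.Char_Poly"
begin

text \<open>Since \<open>\<lambda>\<close> is a root of some diagonal entry of \<open>G\<close>, which divides \<open>X\<^sup>m - 1\<close>,
  evaluation at \<open>\<lambda>\<close> kills \<open>X\<^sup>m - 1\<close>. Hence the right kernel of \<open>M(\<lambda>)\<close> consists
  exactly of the vectors orthogonal to the evaluations of all elements of the module generated by
  \<open>M\<close> and \<open>(X\<^sup>m - 1) e\<^sub>j\<close>, and this only depends on the code generated by \<open>M\<close>.\<close>

lemma comm_ring_hom_field_embedding:
  "field_embedding \<phi> \<Longrightarrow> comm_ring_hom \<phi>"
  unfolding field_embedding_def by unfold_locales auto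

lemma comm_ring_hom_poly_map_poly:
  assumes "field_embedding \<phi>"
  shows "comm_ring_hom (\<lambda>p. poly (map_poly \<phi> p) z)"
proof -
  interpret map_poly_comm_ring_hom \<phi>
    using comm_ring_hom_field_embedding[OF assms] by (simp add: map_poly_comm_ring_hom_def)
  show ?thesis by unfold_locales (simp_all add: hom_distribs)
qed

lemma row_in_gen_module:
  assumes "i < l"
  shows "(\<lambda>k. if k < l then M i k else 0) \<in> gen_module l m M"
  unfolding gen_module_def
proof (intro CollectI exI ext)
  fix k
  show "(if k < l then M i k else 0) =
        (if k < l then (\<Sum>j<l. (if j = i then 1 else 0) * M j k) + 0 * xm1 m else 0)"
    using assms by (simp add: if_distrib[of "\<lambda>x. x * _"] cong: if_cong)
qed

lemma right_kernel_orthogonal_gen_module: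
  assumes fe: "field_embedding \<phi>"
    and root: "poly (map_poly \<phi> (xm1 m)) z = 0"
    and v: "v \<in> right_kernel \<phi> l N z"
    and u: "u \<in> gen_module l m N"
  shows "(\<Sum>k<l. poly (map_poly \<phi> (u k)) z * v k) = 0"
proof -
  interpret ev: comm_ring_hom "\<lambda>p. poly (map_poly \<phi> p) z"
    by (rule comm_ring_hom_poly_map_poly[OF fe])
  obtain a b where u_eq: "u = (\<lambda>k. if k < l then (\<Sum>j<l. a j * N j k) + b k * xm1 m else 0)"
    using u unfolding gen_module_def by auto
  have "(\<Sum>k<l. poly (map_poly \<phi> (u k)) z * v k)
      = (\<Sum>k<l. \<Sum>j<l. poly (map_poly \<phi> (a j)) z * (poly (map_poly \<phi> (N j k)) z * v k))"
    by (intro sum.cong) (simp_all add: u_eq ev.hom_add ev.hom_sum ev.hom_mult root sum_distrib_right mult.assoc)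
  also have "\<dots> = (\<Sum>j<l. poly (map_poly \<phi> (a j)) z * (\<Sum>k<l. poly (map_poly \<phi> (N j k)) z * v k))"
    by (subst sum.swap) (simp add: sum_distrib_left)
  also have "\<dots> = 0"
    using v unfolding right_kernel_def by simp
  finally show ?thesis .
qed

lemma right_kernel_antimono_code:
  assumes fe: "field_embedding \<phi>"
    and root: "poly (map_poly \<phi> (xm1 m)) z = 0"
    and sub: "code_of l m M \<subseteq> code_of l m N"
  shows "right_kernel \<phi> l N z \<subseteq> right_kernel \<phi> l M z"
proof
  interpret ev: comm_ring_hom "\<lambda>p. poly (map_poly \<phi> p) z"
    by (rule comm_ring_hom_poly_map_poly[OF fe])
  fix v assume v: "v \<in> right_kernel \<phi> l N z"
  have "(\<Sum>k<l. poly (map_poly \<phi> (M i k)) z * v k) = 0" if i: "i < l" for i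
  proof -
    define r where "r = (\<lambda>k. if k < l then M i k else 0)"
    have "(\<lambda>k. r k mod xm1 m) \<in> code_of l m N"
      using sub row_in_gen_module[OF i] unfolding code_of_def r_def by blast
    then obtain u where u: "u \<in> gen_module l m N" and r_u: "\<And>k. r k mod xm1 m = u k mod xm1 m"
      unfolding code_of_def by (auto dest: fun_cong)
    have "poly (map_poly \<phi> (M i k)) z = poly (map_poly \<phi> (u k)) z" if k: "k < l" for k
    proof -
      have "xm1 m dvd r k - u k"
        using r_u[of k] by (simp add: mod_eq_dvd_iff)
      then have "poly (map_poly \<phi> (r k - u k)) z = 0"
        using ev.hom_dvd root by fastforce
      then show ?thesis
        using k by (simp add: ev.hom_minus r_def)
    qed
    then show ?thesis
      using right_kernel_orthogonal_gen_module[OF fe root v u] by simp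
  qed
  then show "v \<in> right_kernel \<phi> l M z"
    using v unfolding right_kernel_def by simp
qed

lemma eigenvalue_root_xm1:
  assumes fe: "field_embedding \<phi>"
    and "C3 l m G"
    and "is_eigenvalue \<phi> l G z"
  shows "poly (map_poly \<phi> (xm1 m)) z = 0"
proof -
  interpret ev: comm_ring_hom "\<lambda>p. poly (map_poly \<phi> p) z"
    by (rule comm_ring_hom_poly_map_poly[OF fe])
  obtain i where i: "i < l" and "poly (map_poly \<phi> (G i i)) z = 0"
    using assms(3) unfolding is_eigenvalue_def det_upper_def by (auto simp: ev.hom_prod)
  moreover have "G i i dvd xm1 m"
    using assms(2) i unfolding C3_def by blast
  ultimately show ?thesis
    using ev.hom_dvd by fastforce
qed

theorem lemma2:
  fixes C :: "(nat \<Rightarrow> 'a::{field,finite} poly) set"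
    and l m :: nat
    and G Gbar :: "nat \<Rightarrow> nat \<Rightarrow> 'a poly"
    and \<phi> :: "'a \<Rightarrow> 'b::field"
    and z :: 'b
  assumes "coprime m CHAR('a)"
    and "is_generator_matrix l m C G" and "RGB_POT l m G"
    and "is_generator_matrix l m C Gbar" and "Pre_RGB_POT l m G Gbar"
    and "field_embedding \<phi>"
    and "is_eigenvalue \<phi> l G z"
  shows "right_kernel \<phi> l G z = right_kernel \<phi> l Gbar z"
proof -
  have root: "poly (map_poly \<phi> (xm1 m)) z = 0"
    using eigenvalue_root_xm1 assms(3,6,7) unfolding RGB_POT_def by blast
  have "code_of l m G = code_of l m Gbar"
    using assms(2,4) unfolding is_generator_matrix_def by simp
  then show ?thesis
    using right_kernel_antimono_code[OF assms(6) root] by blast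
qed

end
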